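(* Let $m\ge1$ and $A\ge1$ be integers, and let $\alpha\neq\beta$ be elements of $\mathbb{Z}[\zeta_m]$ whose representations are bounded in $[-A,A]$. Then $$|\alpha-\beta|\ge\frac{1}{(2A\,\phi(m)+1)^{\phi(m)-1}}.$$
   Context: $\zeta_m$ is a primitive $m$-th root of unity and $\phi$ is Euler's totient function. The representation of $\alpha\in\mathbb{Z}[\zeta_m]$ is the unique tuple of integers $(a_0,\dots,a_{\phi(m)-1})$ with $\alpha=\sum_{i=0}^{\phi(m)-1}a_i\zeta_m^i$; it is bounded in $[-A,A]$ if $-A\le a_i\le A$ for all $i$. *)

theory Defs
  imports "HOL-Analysis.Analysis" "HOL-Number_Theory.Number_Theory"
begin

definition cyc_elem :: "nat \<Rightarrow> complex \<Rightarrow> (nat \<Rightarrow> int) \<Rightarrow> complex" where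
  "cyc_elem m z a = (\<Sum>i<totient m. of_int (a i) * z ^ i)"

end

theory Submission
  imports Defs "Berlekamp_Zassenhaus.Berlekamp_Zassenhaus"
begin

text \<open>Let \<open>p \<in> \<int>[X]\<close> represent \<open>\<alpha> - \<beta>\<close> and let \<open>f\<close> be the minimal polynomial of \<open>\<zeta>\<^sub>m\<close>, an irreducible
  monic factor of \<open>X\<^sup>m - 1\<close>. The product of \<open>p(w)\<close> over the roots \<open>w\<close> of \<open>f\<close> is a nonzero integer:
  it is the determinant of the integer matrix \<open>p(C)\<close>, \<open>C\<close> the companion matrix of \<open>f\<close>, because
  the Vandermonde columns of the (simple) roots are a basis of eigenvectors of \<open>C\<close>; and no factor
  vanishes, since \<open>f\<close> would otherwise divide \<open>p\<close>. The roots of \<open>f\<close> are primitive \<open>m\<close>-th roots of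
  unity, so there are at most \<open>\<phi>(m)\<close> of them and \<open>|p(w)| \<le> 2A\<phi>(m)\<close> for each. Hence
  \<open>1 \<le> |p(\<zeta>\<^sub>m)| (2A\<phi>(m) + 1)\<^bsup>\<phi>(m)-1\<^esup>\<close>.\<close>

fun mat_horner :: "'a :: comm_ring_1 list \<Rightarrow> 'a mat \<Rightarrow> 'a mat" where
  "mat_horner [] A = 0\<^sub>m (dim_row A) (dim_row A)"
| "mat_horner (c # cs) A = c \<cdot>\<^sub>m 1\<^sub>m (dim_row A) + A * mat_horner cs A"

lemma mat_horner_carrier [simp]: "A \<in> carrier_mat n n \<Longrightarrow> mat_horner cs A \<in> carrier_mat n n"
  by (induction cs) auto

lemma mat_horner_eigenvector:
  fixes A :: "'a :: field mat"
  assumes A: "A \<in> carrier_mat n n" and v: "v \<in> carrier_vec n" and Av: "A *\<^sub>v v = w \<cdot>\<^sub>v v"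
  shows "mat_horner cs A *\<^sub>v v = poly (Poly cs) w \<cdot>\<^sub>v v"
proof (induction cs)
  case Nil
  show ?case using A v by (auto intro: eq_vecI)
next
  case (Cons c cs)
  have H: "mat_horner cs A \<in> carrier_mat n n" using A by simp
  have "mat_horner (c # cs) A *\<^sub>v v = (c \<cdot>\<^sub>m 1\<^sub>m n) *\<^sub>v v + A *\<^sub>v (mat_horner cs A *\<^sub>v v)"
    using A H v by (simp add: add_mult_distrib_mat_vec[of _ n n] assoc_mult_mat_vec[OF A H v])
  also have "(c \<cdot>\<^sub>m 1\<^sub>m n) *\<^sub>v v = c \<cdot>\<^sub>v v"
    using v by (intro eq_vecI)
      (auto simp: scalar_prod_def if_distrib[of "\<lambda>x. c * x"] if_distrib[of "\<lambda>x. x * v $ _"] cong: if_cong)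
  also have "A *\<^sub>v (mat_horner cs A *\<^sub>v v) = (poly (Poly cs) w * w) \<cdot>\<^sub>v v"
    using Cons A v by (simp add: mult_mat_vec Av smult_smult_assoc)
  finally show ?case using v by (intro eq_vecI) (auto simp: algebra_simps)
qed

lemma (in comm_ring_hom) mat_horner_hom:
  assumes A: "A \<in> carrier_mat n n"
  shows "mat_horner (map hom cs) (mat\<^sub>h A) = mat\<^sub>h (mat_horner cs A)"
proof (induction cs)
  case (Cons c cs)
  have "mat\<^sub>h (mat_horner (c # cs) A) = hom c \<cdot>\<^sub>m 1\<^sub>m n + mat\<^sub>h (A * mat_horner cs A)"
    using A by (intro eq_matI) (auto simp: hom_add carrier_matD[OF mat_horner_carrier[OF A]])
  then show ?case using A Cons by (simp add: mat_hom_mult[OF A mat_horner_carrier[OF A]])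
qed (auto intro: eq_matI)

lemma det_mat_horner_eigenbasis:
  fixes A V :: "'a :: field mat"
  assumes A: "A \<in> carrier_mat n n" and V: "V \<in> carrier_mat n n" and "det V \<noteq> 0"
    and eig: "\<And>j. j < n \<Longrightarrow> A *\<^sub>v col V j = ev j \<cdot>\<^sub>v col V j"
  shows "det (mat_horner cs A) = (\<Prod>j<n. poly (Poly cs) (ev j))"
proof -
  let ?H = "mat_horner cs A" and ?D = "mat_diag n (\<lambda>j. poly (Poly cs) (ev j))"
  have H: "?H \<in> carrier_mat n n" using A by simp
  have "?H * V = V * ?D"
  proof (rule mat_col_eqI)
    fix j assume "j < dim_col (V * ?D)"
    then have j: "j < n" by (simp add: mat_diag_def)
    have "col (?H * V) j = ?H *\<^sub>v col V j" by (rule col_mult2[OF H V j])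
    also have "\<dots> = poly (Poly cs) (ev j) \<cdot>\<^sub>v col V j"
      using V j by (intro mat_horner_eigenvector[OF A _ eig]) auto
    also have "\<dots> = col (V * ?D) j"
      using V j by (intro eq_vecI) (auto simp: mat_diag_mult_right[OF V])
    finally show "col (?H * V) j = col (V * ?D) j" .
  qed (use H V in \<open>auto simp: mat_diag_def\<close>)
  then have "det ?H * det V = det ?D * det V"
    by (metis det_mult[OF H V] det_mult[OF V mat_diag_dim] mult.commute)
  then have "det ?H = det ?D" using \<open>det V \<noteq> 0\<close> by simp
  also have "det ?D = prod_list (diag_mat ?D)"
    by (rule det_upper_triangular) (auto simp: upper_triangular_def mat_diag_def)
  also have "\<dots> = (\<Prod>j<n. poly (Poly cs) (ev j))"
    by (simp add: diag_mat_def mat_diag_def prod.list_conv_set_nth atLeast0LessThan)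
  finally show ?thesis .
qed

lemma vandermonde_det_nonzero:
  fixes ws :: "'a :: idom list"
  assumes "distinct ws" and "length ws = n"
  shows "det (mat n n (\<lambda>(j, k). ws ! j ^ k)) \<noteq> 0"
proof
  let ?W = "mat n n (\<lambda>(j, k). ws ! j ^ k)"
  assume "det ?W = 0"
  then obtain v where v: "v \<in> carrier_vec n" "v \<noteq> 0\<^sub>v n" "?W *\<^sub>v v = 0\<^sub>v n"
    using det_0_iff_vec_prod_zero[of ?W n] by auto
  define q where "q = (\<Sum>k<n. Polynomial.monom (v $ k) k)"
  have coeff_q: "Polynomial.coeff q k = (if k < n then v $ k else 0)" for k
    unfolding q_def by (simp add: coeff_sum coeff_monom)
  obtain i where i: "i < n" "v $ i \<noteq> 0"
    using v(1,2) by (metis carrier_vecD eq_vecI index_zero_vec)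
  then have "q \<noteq> 0" using coeff_q[of i] by auto
  have "degree q < n"
  proof -
    have "degree q \<le> n - 1" by (rule degree_le) (use coeff_q i in auto)
    then show ?thesis using i by auto
  qed
  have "set ws \<subseteq> {x. poly q x = 0}"
  proof
    fix x assume "x \<in> set ws"
    then obtain j where j: "j < n" "x = ws ! j" using assms(2) by (auto simp: in_set_conv_nth)
    have "0 = (?W *\<^sub>v v) $ j" using v(3) j by simp
    also have "\<dots> = (\<Sum>k<n. v $ k * x ^ k)"
      using j v(1) by (auto simp: scalar_prod_def atLeast0LessThan mult.commute intro!: sum.cong)
    also have "\<dots> = poly q x"
      unfolding q_def by (simp add: poly_sum poly_monom)
    finally show "x \<in> {x. poly q x = 0}" by simp
  qed
  then have "card (set ws) \<le> card {x. poly q x = 0}"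
    using poly_roots_finite[OF \<open>q \<noteq> 0\<close>] by (rule card_mono[rotated])
  also have "\<dots> \<le> degree q" by (rule card_poly_roots_bound[OF \<open>q \<noteq> 0\<close>])
  finally show False using \<open>degree q < n\<close> assms distinct_card by fastforce
qed

text \<open>The transpose of the usual companion matrix: it acts on the column \<open>(1, w, \<dots>, w\<^bsup>d-1\<^esup>)\<close>
  as multiplication by any root \<open>w\<close> of \<open>f\<close>.\<close>
definition companion_mat :: "'a :: comm_ring_1 poly \<Rightarrow> 'a mat" where
  "companion_mat f = mat (degree f) (degree f)
     (\<lambda>(i, k). if Suc i < degree f then of_bool (k = Suc i) else - Polynomial.coeff f k)"

lemma companion_mat_carrier [simp]: "companion_mat f \<in> carrier_mat (degree f) (degree f)"
  by (simp add: companion_mat_def)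

lemma companion_mat_eigenvector:
  fixes f :: "'a :: comm_ring_1 poly"
  assumes monic: "lead_coeff f = 1" and root: "poly f w = 0"
  shows "companion_mat f *\<^sub>v vec (degree f) (\<lambda>i. w ^ i) = w \<cdot>\<^sub>v vec (degree f) (\<lambda>i. w ^ i)"
proof (rule eq_vecI)
  let ?d = "degree f"
  fix i assume "i < dim_vec (w \<cdot>\<^sub>v vec ?d (\<lambda>i. w ^ i))"
  then have i: "i < ?d" by simp
  have row: "(companion_mat f *\<^sub>v vec ?d (\<lambda>i. w ^ i)) $ i
      = (\<Sum>k<?d. (if Suc i < ?d then of_bool (k = Suc i) else - Polynomial.coeff f k) * w ^ k)"
    using i by (simp add: companion_mat_def scalar_prod_def atLeast0LessThan)
  show "(companion_mat f *\<^sub>v vec ?d (\<lambda>i. w ^ i)) $ i = (w \<cdot>\<^sub>v vec ?d (\<lambda>i. w ^ i)) $ i"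
  proof (cases "Suc i < ?d")
    case True
    then show ?thesis unfolding row using i by (simp add: sum.If_cases)
  next
    case False
    then have "Suc i = ?d" using i by simp
    have "0 = (\<Sum>k<?d. Polynomial.coeff f k * w ^ k) + w ^ ?d"
      using root monic by (simp add: poly_altdef lessThan_Suc_atMost[symmetric])
    then have "(\<Sum>k<?d. - Polynomial.coeff f k * w ^ k) = w ^ ?d"
      by (simp add: sum_negf minus_equation_iff add_eq_0_iff)
    then show ?thesis unfolding row using i False by (simp flip: \<open>Suc i = ?d\<close>)
  qed
qed (simp add: companion_mat_def)

lemma (in inj_comm_ring_hom) companion_mat_hom:
  "companion_mat (map_poly hom f) = mat\<^sub>h (companion_mat f)"
  by (intro eq_matI) (auto simp: companion_mat_def coeff_map_poly hom_uminus)

lemma prod_roots_of_monic_Ints: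
  fixes f p :: "int poly"
  assumes monic: "lead_coeff f = 1"
    and squarefree: "card {w::complex. poly (of_int_poly f) w = 0} = degree f"
  shows "(\<Prod>w | poly (of_int_poly f) w = 0. poly (of_int_poly p) (w::complex)) \<in> \<int>"
proof -
  let ?R = "{w::complex. poly (of_int_poly f) w = 0}" and ?n = "degree f"
  have "of_int_poly f \<noteq> (0 :: complex poly)" using monic by auto
  then obtain ws where ws: "set ws = ?R" "distinct ws"
    using finite_distinct_list[OF poly_roots_finite] by blast
  then have len: "length ws = ?n" using squarefree distinct_card by fastforce
  define C :: "complex mat" where "C = companion_mat (of_int_poly f)"
  define V where "V = transpose_mat (mat ?n ?n (\<lambda>(j, k). ws ! j ^ k))"
  have C: "C \<in> carrier_mat ?n ?n" unfolding C_def
    using companion_mat_carrier[of "of_int_poly f :: complex poly"] by simp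
  have V: "V \<in> carrier_mat ?n ?n" unfolding V_def by simp
  have "det V \<noteq> 0"
    unfolding V_def using vandermonde_det_nonzero[OF ws(2) len] by (subst det_transpose) auto
  have eig: "C *\<^sub>v col V j = ws ! j \<cdot>\<^sub>v col V j" if "j < ?n" for j
  proof -
    have "col V j = vec (degree (of_int_poly f :: complex poly)) (\<lambda>i. ws ! j ^ i)"
      using that unfolding V_def by (intro eq_vecI) auto
    moreover have "ws ! j \<in> ?R" unfolding ws(1)[symmetric] using that len by simp
    ultimately show ?thesis
      unfolding C_def using companion_mat_eigenvector[of "of_int_poly f" "ws ! j"] monic by simp
  qed
  have "mat_horner (map of_int (coeffs p)) C = map_mat of_int (mat_horner (coeffs p) (companion_mat f))"
    unfolding C_def of_int_hom.companion_mat_hom by (rule of_int_hom.mat_horner_hom[OF companion_mat_carrier])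
  then have "of_int (det (mat_horner (coeffs p) (companion_mat f)))
      = det (mat_horner (map of_int (coeffs p)) C)"
    by simp
  also have "\<dots> = (\<Prod>j<?n. poly (of_int_poly p) (ws ! j))"
    using det_mat_horner_eigenbasis[OF C V \<open>det V \<noteq> 0\<close> eig] by (simp add: map_poly_def)
  also have "\<dots> = (\<Prod>w\<in>?R. poly (of_int_poly p) w)"
    by (simp add: ws(1)[symmetric] prod.distinct_set_conv_list[OF ws(2)] prod.list_conv_set_nth
        len atLeast0LessThan)
  finally show ?thesis by (metis Ints_of_int)
qed

lemma root_of_int_poly_dvd:
  fixes f g :: "int poly" and w :: complex
  assumes "f dvd g" and "poly (of_int_poly f) w = 0"
  shows "poly (of_int_poly g) w = 0"
proof -
  obtain h where "g = f * h" using assms(1) by (elim dvdE)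
  then show ?thesis using assms(2) by (simp add: of_int_poly_hom.hom_mult)
qed

lemma irreducible_dvd_of_common_root:
  fixes f g :: "int poly" and w :: complex
  assumes irr: "irreducible f" and "poly (of_int_poly f) w = 0" and "poly (of_int_poly g) w = 0"
  shows "f dvd g"
proof -
  interpret rat_complex: field_hom' "of_rat :: rat \<Rightarrow> complex" by standard
  define G where "G = gcd f g"
  have "G \<noteq> 0" unfolding G_def using irr by auto
  have of_rat_of_int: "map_poly (of_rat :: rat \<Rightarrow> complex) (of_int_poly p) = of_int_poly p" for p
    by (subst map_poly_map_poly) (auto simp: comp_def)
  \<comment> \<open>Gauss' lemma: over \<open>\<rat>\<close>, hence over \<open>\<complex>\<close>, the gcd is \<open>G\<close> up to a unit.\<close>
  have "gcd (of_int_poly f :: complex poly) (of_int_poly g)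
      = map_poly of_rat (gcd (of_int_poly f :: rat poly) (of_int_poly g))"
    by (simp add: rat_complex.map_poly_gcd of_rat_of_int)
  also have "\<dots> = map_poly of_rat (Polynomial.smult (inverse (of_int (lead_coeff G))) (of_int_poly G :: rat poly))"
    unfolding gcd_rat_to_gcd_int G_def ..
  also have "\<dots> = Polynomial.smult (inverse (of_int (lead_coeff G))) (of_int_poly G)"
    by (intro poly_eqI) (simp add: coeff_map_poly of_rat_mult of_rat_inverse)
  finally have gcd_eq: "gcd (of_int_poly f :: complex poly) (of_int_poly g)
      = Polynomial.smult (inverse (of_int (lead_coeff G))) (of_int_poly G)" .
  have "poly (gcd (of_int_poly f :: complex poly) (of_int_poly g)) w = 0"
    using assms(2,3) by (simp add: poly_eq_0_iff_dvd)
  then have root_G: "poly (of_int_poly G) w = 0"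
    using \<open>G \<noteq> 0\<close> unfolding gcd_eq by simp
  have "\<not> G dvd 1"
  proof
    assume "G dvd 1"
    then obtain c where "G = [:c:]" "c dvd 1" by (auto simp: is_unit_poly_iff)
    then show False using root_G by auto
  qed
  obtain h where fh: "f = G * h" unfolding G_def by (metis dvdE gcd_dvd1)
  with \<open>\<not> G dvd 1\<close> have "h dvd 1" using irreducibleD[OF irr fh] by auto
  then have "f dvd G" using fh by (simp add: dvd_mult_unit_iff)
  then show ?thesis unfolding G_def by (simp add: dvd_trans)
qed

lemma monic_irreducible_factor_with_root:
  fixes g :: "int poly" and z :: complex
  assumes monic: "lead_coeff g = 1" and root: "poly (of_int_poly g) z = 0"
  obtains f where "irreducible f" "lead_coeff f = 1" "f dvd g" "poly (of_int_poly f) z = 0"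
proof -
  have "g \<noteq> 0" using monic by auto
  from prime_factorization_exists'[OF this] obtain P where
    P: "\<And>p. p \<in># P \<Longrightarrow> prime p" "normalize (prod_mset P) = normalize g" by blast
  have "poly (of_int_poly (prod_mset P)) z = 0"
    using root_of_int_poly_dvd[OF _ root] P(2) by (metis dvd_normalize_iff dvd_refl)
  then obtain p where p: "p \<in># P" "poly (of_int_poly p) z = 0"
    by (induction P) (auto simp: of_int_poly_hom.hom_mult)
  have "irreducible p" using P(1)[OF p(1)] by (intro prime_elem_imp_irreducible prime_imp_prime_elem)
  have "p dvd g" using dvd_prod_mset[OF p(1)] P(2) by (metis dvd_normalize_iff dvd_trans)
  then obtain q where "g = p * q" by (elim dvdE)
  then have "lead_coeff p * lead_coeff q = 1" using monic by (simp add: lead_coeff_mult)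
  then have "lead_coeff p = 1 \<or> lead_coeff p = -1" by (auto simp: zmult_eq_1_iff)
  then show ?thesis
  proof
    assume "lead_coeff p = 1"
    then show ?thesis using that \<open>irreducible p\<close> \<open>p dvd g\<close> p(2) by blast
  next
    assume "lead_coeff p = -1"
    moreover have "irreducible (-p)" using \<open>irreducible p\<close> by (simp add: irreducible_uminus)
    ultimately show ?thesis
      using \<open>p dvd g\<close> p(2) by (intro that[of "-p"]) (auto simp: of_int_poly_hom.hom_uminus)
  qed
qed

definition x_pow_minus_one :: "nat \<Rightarrow> int poly" where
  "x_pow_minus_one k = Polynomial.monom 1 k - 1"

lemma of_int_poly_x_pow_minus_one:
  "(of_int_poly (x_pow_minus_one k) :: 'a :: comm_ring_1 poly) = Polynomial.monom 1 k - 1"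
  unfolding x_pow_minus_one_def by (simp add: of_int_poly_hom.hom_minus map_poly_monom)

lemma poly_x_pow_minus_one: "poly (of_int_poly (x_pow_minus_one k)) (w :: 'a :: comm_ring_1) = w ^ k - 1"
  by (simp add: of_int_poly_x_pow_minus_one poly_monom)

lemma lead_coeff_x_pow_minus_one:
  assumes "k \<ge> 1"
  shows "lead_coeff (x_pow_minus_one k) = 1"
proof -
  have "degree (x_pow_minus_one k) = k"
    unfolding x_pow_minus_one_def diff_conv_add_uminus using assms
    by (subst degree_add_eq_left) (auto simp: degree_monom_eq)
  then show ?thesis unfolding x_pow_minus_one_def using assms by simp
qed

lemma card_roots_of_dvd_x_pow_minus_one:
  fixes f :: "int poly"
  assumes "f dvd x_pow_minus_one m" and "m \<ge> 1"
  shows "card {w::complex. poly (of_int_poly f) w = 0} = degree f"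
proof -
  let ?X = "Polynomial.monom 1 m - 1 :: complex poly" and ?f = "of_int_poly f :: complex poly"
  have "poly ?X 0 \<noteq> 0" using assms(2) by (simp add: poly_monom power_0_left)
  then have "?X \<noteq> 0" by auto
  have "?f dvd of_int_poly (x_pow_minus_one m)" by (rule of_int_poly_hom.hom_dvd[OF assms(1)])
  then have "?f dvd ?X" by (simp only: of_int_poly_x_pow_minus_one)
  \<comment> \<open>\<open>X\<^sup>m - 1\<close> is coprime to its derivative \<open>m X\<^sup>m\<^sup>-\<^sup>1\<close>, so it has only simple roots.\<close>
  have "rsquarefree ?X"
    unfolding rsquarefree_roots
  proof (intro allI notI)
    fix x assume "poly ?X x = 0 \<and> poly (pderiv ?X) x = 0"
    then have "x ^ m = 1" "of_nat m * x ^ (m - 1) = 0"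
      by (auto simp: pderiv_diff pderiv_monom poly_monom)
    moreover from this(1) have "x \<noteq> 0" using assms(2) by (auto simp: power_0_left)
    ultimately show False using assms(2) by simp
  qed
  have "Polynomial.order x ?f \<le> 1" for x
    using dvd_imp_order_le[OF \<open>?X \<noteq> 0\<close> \<open>?f dvd ?X\<close>] \<open>rsquarefree ?X\<close>
    unfolding rsquarefree_def' by (meson order_trans)
  then have "rsquarefree ?f"
    using \<open>?f dvd ?X\<close> \<open>?X \<noteq> 0\<close> unfolding rsquarefree_def' by auto
  then show ?thesis using rsquarefree_card_degree[of ?f] by (simp add: rsquarefree_def)
qed

definition prim_root_unity :: "nat \<Rightarrow> 'a :: monoid_mult \<Rightarrow> bool" where
  "prim_root_unity m w \<longleftrightarrow> w ^ m = 1 \<and> (\<forall>k\<in>{1..<m}. w ^ k \<noteq> 1)"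

lemma roots_unity_eq_powers:
  fixes z :: complex
  assumes "m \<ge> 1" and prim: "prim_root_unity m z"
  shows "{w. w ^ m = 1} = (\<lambda>j. z ^ j) ` {1..m}"
proof -
  have "z \<noteq> 0" using prim assms(1) by (auto simp: prim_root_unity_def power_0_left)
  have "inj_on (\<lambda>j. z ^ j) {1..m}"
  proof (rule linorder_inj_onI)
    fix i j assume "i < j" "i \<in> {1..m}" "j \<in> {1..m}"
    then have "j - i \<in> {1..<m}" by auto
    then have "z ^ (j - i) \<noteq> 1" using prim by (simp add: prim_root_unity_def)
    moreover have "z ^ j = z ^ i * z ^ (j - i)" using \<open>i < j\<close> by (simp flip: power_add)
    ultimately show "z ^ i \<noteq> z ^ j" using \<open>z \<noteq> 0\<close> by auto
  qed auto
  then have "card ((\<lambda>j. z ^ j) ` {1..m}) = card {w::complex. w ^ m = 1}"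
    using assms(1) by (simp add: card_image card_roots_unity_eq)
  moreover have "(z ^ j) ^ m = (z ^ m) ^ j" for j by (simp flip: power_mult add: mult.commute)
  then have "(\<lambda>j. z ^ j) ` {1..m} \<subseteq> {w. w ^ m = 1}"
    using prim by (auto simp: prim_root_unity_def)
  ultimately show ?thesis
    using finite_roots_unity[of m] assms(1) by (intro card_subset_eq[symmetric]) auto
qed

lemma gcd_eq_1_of_prim_root_unity_power:
  fixes z :: "'a :: monoid_mult"
  assumes "m \<ge> 1" and "z ^ m = 1" and "prim_root_unity m (z ^ j)"
  shows "gcd j m = 1"
proof (rule ccontr)
  define g where "g = gcd j m"
  assume "gcd j m \<noteq> 1"
  then have "g \<noteq> 1" unfolding g_def .
  moreover have "g > 0" using assms(1) unfolding g_def by simp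
  ultimately have "g \<ge> 2" by linarith
  have "g dvd m" unfolding g_def by simp
  then obtain k where k: "m = g * k" by (elim dvdE)
  have "g dvd j" unfolding g_def by simp
  then obtain i where i: "j = g * i" by (elim dvdE)
  have "k \<ge> 1" using k assms(1) by (cases k) auto
  then have "1 * k < g * k" using \<open>g \<ge> 2\<close> by (intro mult_strict_right_mono) auto
  then have "k \<in> {1..<m}" using k \<open>k \<ge> 1\<close> by simp
  moreover have "(z ^ j) ^ k = (z ^ m) ^ i"
    unfolding i k by (simp flip: power_mult add: ac_simps)
  then have "(z ^ j) ^ k = 1" using assms(2) by simp
  ultimately show False using assms(3) by (auto simp: prim_root_unity_def)
qed

lemma card_prim_roots_unity_le_totient:
  fixes z :: complex
  assumes "m \<ge> 1" and "prim_root_unity m z"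
  shows "card {w::complex. prim_root_unity m w} \<le> totient m"
proof -
  have "{w. prim_root_unity m w} \<subseteq> (\<lambda>j. z ^ j) ` totatives m"
  proof
    fix w :: complex assume "w \<in> {w. prim_root_unity m w}"
    then have prim_w: "prim_root_unity m w" by simp
    then have "w \<in> {w. w ^ m = 1}" by (simp add: prim_root_unity_def)
    then obtain j where j: "j \<in> {1..m}" "w = z ^ j"
      unfolding roots_unity_eq_powers[OF assms] by (elim imageE)
    have "z ^ m = 1" using assms(2) by (simp add: prim_root_unity_def)
    then have "gcd j m = 1"
      using gcd_eq_1_of_prim_root_unity_power assms(1) prim_w j(2) by blast
    then have "j \<in> totatives m"
      unfolding in_totatives_iff using j(1) by (intro conjI gcd_eq_1_imp_coprime) auto
    then show "w \<in> (\<lambda>j. z ^ j) ` totatives m" using j(2) by blast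
  qed
  then have "card {w::complex. prim_root_unity m w} \<le> card ((\<lambda>j. z ^ j) ` totatives m)"
    by (rule card_mono[OF finite_imageI[OF finite_totatives]])
  also have "\<dots> \<le> totient m" unfolding totient_def by (rule card_image_le) simp
  finally show ?thesis .
qed

lemma prim_root_unity_of_common_root:
  fixes f :: "int poly" and z w :: complex
  assumes irr: "irreducible f" and "f dvd x_pow_minus_one m"
    and "poly (of_int_poly f) z = 0" and "poly (of_int_poly f) w = 0" and "prim_root_unity m z"
  shows "prim_root_unity m w"
  unfolding prim_root_unity_def
proof (intro conjI ballI)
  show "w ^ m = 1"
    using root_of_int_poly_dvd[OF assms(2,4)] by (simp add: poly_x_pow_minus_one)
next
  fix k assume "k \<in> {1..<m}"
  show "w ^ k \<noteq> 1"
  proof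
    assume "w ^ k = 1"
    then have "f dvd x_pow_minus_one k"
      using assms(4) by (intro irreducible_dvd_of_common_root[OF irr]) (simp_all add: poly_x_pow_minus_one)
    then have "poly (of_int_poly (x_pow_minus_one k)) z = 0" using assms(3) by (rule root_of_int_poly_dvd)
    then have "z ^ k = 1" by (simp add: poly_x_pow_minus_one)
    then show False using assms(5) \<open>k \<in> {1..<m}\<close> by (simp add: prim_root_unity_def)
  qed
qed

lemma conjugates_of_prim_root_unity:
  fixes z :: complex
  assumes "m \<ge> 1" and prim: "prim_root_unity m z"
  obtains R where "finite R" "z \<in> R" "card R \<le> totient m" "\<And>w. w \<in> R \<Longrightarrow> prim_root_unity m w"
    "\<And>q. poly (of_int_poly q) z \<noteq> 0 \<Longrightarrow> (\<Prod>w\<in>R. poly (of_int_poly q) w) \<in> \<int> - {0}"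
proof -
  have "poly (of_int_poly (x_pow_minus_one m)) z = 0"
    using prim by (simp add: poly_x_pow_minus_one prim_root_unity_def)
  then obtain f where f: "irreducible f" "lead_coeff f = 1" "f dvd x_pow_minus_one m"
      "poly (of_int_poly f) z = 0"
    by (rule monic_irreducible_factor_with_root[OF lead_coeff_x_pow_minus_one[OF assms(1)]])
  define R where "R = {w::complex. poly (of_int_poly f) w = 0}"
  have "of_int_poly f \<noteq> (0 :: complex poly)" using f(2) by auto
  then have "finite R" unfolding R_def by (rule poly_roots_finite)
  have "z \<in> R" unfolding R_def using f(4) by simp
  have prim_R: "prim_root_unity m w" if "w \<in> R" for w
    using prim_root_unity_of_common_root[OF f(1,3,4) _ prim] that by (simp add: R_def)
  have "finite {w::complex. prim_root_unity m w}"
    using assms(1) by (intro finite_subset[OF _ finite_roots_unity[of m]]) (auto simp: prim_root_unity_def)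
  then have "card R \<le> card {w::complex. prim_root_unity m w}"
    using prim_R by (intro card_mono) auto
  also have "\<dots> \<le> totient m" by (rule card_prim_roots_unity_le_totient[OF assms])
  finally have "card R \<le> totient m" .
  moreover have "(\<Prod>w\<in>R. poly (of_int_poly q) w) \<in> \<int> - {0}" if "poly (of_int_poly q) z \<noteq> 0" for q
  proof
    have "card R = degree f" unfolding R_def by (rule card_roots_of_dvd_x_pow_minus_one[OF f(3) assms(1)])
    then show "(\<Prod>w\<in>R. poly (of_int_poly q) w) \<in> \<int>"
      unfolding R_def by (rule prod_roots_of_monic_Ints[OF f(2)])
    have "poly (of_int_poly q) w \<noteq> 0" if "w \<in> R" for w
    proof
      assume "poly (of_int_poly q) w = 0"
      then have "f dvd q" using \<open>w \<in> R\<close> R_def irreducible_dvd_of_common_root[OF f(1)] by blast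
      then show False using root_of_int_poly_dvd f(4) \<open>poly (of_int_poly q) z \<noteq> 0\<close> by blast
    qed
    then show "(\<Prod>w\<in>R. poly (of_int_poly q) w) \<notin> {0}" using \<open>finite R\<close> by simp
  qed
  ultimately show ?thesis using that \<open>finite R\<close> \<open>z \<in> R\<close> prim_R by blast
qed

lemma cyc_elem_eq_poly:
  "cyc_elem m w a = poly (of_int_poly (\<Sum>i<totient m. Polynomial.monom (a i) i)) w"
  by (simp add: cyc_elem_def of_int_poly_hom.hom_sum poly_sum map_poly_monom poly_monom)

lemma norm_cyc_elem_diff_le:
  fixes w :: complex
  assumes "norm w = 1" and "\<forall>i<totient m. \<bar>a i\<bar> \<le> A" and "\<forall>i<totient m. \<bar>b i\<bar> \<le> A"
  shows "norm (cyc_elem m w a - cyc_elem m w b) \<le> 2 * real_of_int A * real (totient m)"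
proof -
  have "norm (cyc_elem m w a - cyc_elem m w b) = norm (\<Sum>i<totient m. of_int (a i - b i) * w ^ i)"
    by (simp add: cyc_elem_def algebra_simps sum_subtractf)
  also have "\<dots> \<le> (\<Sum>i<totient m. norm (of_int (a i - b i) * w ^ i))" by (rule norm_sum)
  also have "\<dots> = (\<Sum>i<totient m. real_of_int \<bar>a i - b i\<bar>)"
    using assms(1) by (simp del: of_int_diff add: norm_mult norm_power)
  also have "\<dots> \<le> (\<Sum>i<totient m. 2 * real_of_int A)"
  proof (rule sum_mono)
    fix i assume "i \<in> {..<totient m}"
    then have "\<bar>a i\<bar> \<le> A" "\<bar>b i\<bar> \<le> A" using assms(2,3) by auto
    then show "real_of_int \<bar>a i - b i\<bar> \<le> 2 * real_of_int A" by linarith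
  qed
  finally show ?thesis by (simp add: mult.commute)
qed

lemma norm_ge_of_nonzero_integral_prod:
  fixes g :: "'a \<Rightarrow> 'b :: real_normed_field"
  assumes "finite R" and "z \<in> R" and "card R \<le> n" and "(\<Prod>w\<in>R. g w) \<in> \<int> - {0}"
    and "\<And>w. w \<in> R \<Longrightarrow> norm (g w) \<le> B" and "B \<ge> 1"
  shows "1 / B ^ (n - 1) \<le> norm (g z)"
proof -
  obtain k where "(\<Prod>w\<in>R. g w) = of_int k" "k \<noteq> 0" using assms(4) by (auto elim: Ints_cases)
  then have "1 \<le> norm (\<Prod>w\<in>R. g w)" by simp
  also have "\<dots> = norm (g z) * (\<Prod>w\<in>R - {z}. norm (g w))"
    using assms(1,2) by (simp add: prod.remove norm_mult prod_norm)
  also have "\<dots> \<le> norm (g z) * B ^ (n - 1)"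
  proof (intro mult_left_mono prod_le_power)
    show "card (R - {z}) \<le> n - 1" using assms(1-3) by simp
  qed (use assms(5,6) in auto)
  finally show ?thesis using assms(6) by (simp add: divide_le_eq mult.commute)
qed

theorem mainTheorem8:
  fixes m :: nat and A :: int and z :: complex and a b :: "nat \<Rightarrow> int"
  assumes "m \<ge> 1" and "A \<ge> 1"
    and "z ^ m = 1" and "\<forall>k\<in>{1..<m}. z ^ k \<noteq> 1"
    and "\<forall>i<totient m. \<bar>a i\<bar> \<le> A"
    and "\<forall>i<totient m. \<bar>b i\<bar> \<le> A"
    and "cyc_elem m z a \<noteq> cyc_elem m z b"
  shows "norm (cyc_elem m z a - cyc_elem m z b)
           \<ge> 1 / (2 * real_of_int A * real (totient m) + 1) ^ (totient m - 1)"
proof -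
  have "prim_root_unity m z" using assms(3,4) by (simp add: prim_root_unity_def)
  then obtain R where R: "finite R" "z \<in> R" "card R \<le> totient m"
      "\<And>w. w \<in> R \<Longrightarrow> prim_root_unity m w"
      "\<And>q. poly (of_int_poly q) z \<noteq> 0 \<Longrightarrow> (\<Prod>w\<in>R. poly (of_int_poly q) w) \<in> \<int> - {0}"
    using conjugates_of_prim_root_unity[OF assms(1)] by blast
  define g where "g w = cyc_elem m w a - cyc_elem m w b" for w
  have "(\<Prod>w\<in>R. g w) \<in> \<int> - {0}"
    using R(5)[of "(\<Sum>i<totient m. Polynomial.monom (a i) i) - (\<Sum>i<totient m. Polynomial.monom (b i) i)"]
      assms(7) by (simp add: g_def cyc_elem_eq_poly of_int_poly_hom.hom_minus)
  moreover have "norm (g w) \<le> 2 * real_of_int A * real (totient m) + 1" if "w \<in> R" for w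
  proof -
    have "norm w ^ m = 1" using R(4)[OF that] by (simp add: prim_root_unity_def flip: norm_power)
    then have "norm w = 1" using power_eq_iff_eq_base[of m "norm w" 1] assms(1) by simp
    then show ?thesis unfolding g_def using norm_cyc_elem_diff_le[of w m a A b] assms(5,6) by simp
  qed
  ultimately have "1 / (2 * real_of_int A * real (totient m) + 1) ^ (totient m - 1) \<le> norm (g z)"
    using assms(2) by (intro norm_ge_of_nonzero_integral_prod[OF R(1-3)]) auto
  then show ?thesis by (simp add: g_def)
qed

end
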